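(* Let $G$ be a finite connected graph of diameter $2$. If $G$ is Bonnet–Myers sharp, then $G$ is isomorphic to the cocktail party graph $CP(m)$ for some $m\ge 2$. Conversely, every $CP(m)$ with $m\ge2$ is a Bonnet–Myers sharp graph of diameter $2$.
   Context: All graphs are finite, simple, connected and undirected, with the combinatorial shortest-path distance $d$. For $V=\{v_1,\dots,v_n\}$, $D=(d(v_i,v_j))_{i,j=1}^n$ is the distance matrix and $\mathbf{1}_n$ the all-ones column vector. When $DK=n\mathbf{1}_n$ has solutions, the Steinerberger curvature is a solution $K$ for which $\min_iK_i$ is maximal among all solutions. $G$ is Bonnet–Myers sharp if $DK=n\mathbf{1}_n$ has a solution and its Steinerberger curvature $K$ satisfies $\min_iK_i=2/\mathrm{diam}(G)$. The cocktail party graph $CP(m)$ is the complete graph $K_{2m}$ with the edges of a perfect matching removed. *)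

theory Defs
  imports Complex_Main
begin

definition simple_graph :: "'a set \<Rightarrow> ('a \<Rightarrow> 'a \<Rightarrow> bool) \<Rightarrow> bool" where
  "simple_graph V E \<longleftrightarrow> finite V \<and> V \<noteq> {} \<and>
     (\<forall>x y. E x y \<longrightarrow> x \<in> V \<and> y \<in> V) \<and>
     (\<forall>x y. E x y \<longrightarrow> E y x) \<and> (\<forall>x. \<not> E x x)"

definition walk_of_len :: "'a set \<Rightarrow> ('a \<Rightarrow> 'a \<Rightarrow> bool) \<Rightarrow> nat \<Rightarrow> 'a \<Rightarrow> 'a \<Rightarrow> bool" where
  "walk_of_len V E n x y \<longleftrightarrow> (\<exists>p::nat \<Rightarrow> 'a. p 0 = x \<and> p n = y \<and>
      (\<forall>i\<le>n. p i \<in> V) \<and> (\<forall>i<n. E (p i) (p (Suc i))))"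

definition connected_graph :: "'a set \<Rightarrow> ('a \<Rightarrow> 'a \<Rightarrow> bool) \<Rightarrow> bool" where
  "connected_graph V E \<longleftrightarrow> (\<forall>x\<in>V. \<forall>y\<in>V. \<exists>n. walk_of_len V E n x y)"

definition gdist :: "'a set \<Rightarrow> ('a \<Rightarrow> 'a \<Rightarrow> bool) \<Rightarrow> 'a \<Rightarrow> 'a \<Rightarrow> nat" where
  "gdist V E x y = (LEAST n. walk_of_len V E n x y)"

definition diam :: "'a set \<Rightarrow> ('a \<Rightarrow> 'a \<Rightarrow> bool) \<Rightarrow> nat" where
  "diam V E = Max {gdist V E x y | x y. x \<in> V \<and> y \<in> V}"

definition curv_solution :: "'a set \<Rightarrow> ('a \<Rightarrow> 'a \<Rightarrow> bool) \<Rightarrow> ('a \<Rightarrow> real) \<Rightarrow> bool" where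
  "curv_solution V E K \<longleftrightarrow>
     (\<forall>i\<in>V. (\<Sum>j\<in>V. real (gdist V E i j) * K j) = real (card V))"

definition steinerberger_curvature :: "'a set \<Rightarrow> ('a \<Rightarrow> 'a \<Rightarrow> bool) \<Rightarrow> ('a \<Rightarrow> real) \<Rightarrow> bool" where
  "steinerberger_curvature V E K \<longleftrightarrow> curv_solution V E K \<and>
     (\<forall>K'. curv_solution V E K' \<longrightarrow> Min (K' ` V) \<le> Min (K ` V))"

definition bonnet_myers_sharp :: "'a set \<Rightarrow> ('a \<Rightarrow> 'a \<Rightarrow> bool) \<Rightarrow> bool" where
  "bonnet_myers_sharp V E \<longleftrightarrow> (\<exists>K. curv_solution V E K) \<and>
     (\<exists>K. steinerberger_curvature V E K \<and> Min (K ` V) = 2 / real (diam V E))"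

text \<open>Cocktail party graph CP(m): vertices 0..2m-1, pairs {2k,2k+1} form the removed
perfect matching.\<close>
definition cp_vertices :: "nat \<Rightarrow> nat set" where
  "cp_vertices m = {..<2*m}"

definition cp_edge :: "nat \<Rightarrow> nat \<Rightarrow> nat \<Rightarrow> bool" where
  "cp_edge m i j \<longleftrightarrow> i < 2*m \<and> j < 2*m \<and> i div 2 \<noteq> j div 2"

definition graph_iso :: "'a set \<Rightarrow> ('a \<Rightarrow> 'a \<Rightarrow> bool) \<Rightarrow> 'b set \<Rightarrow> ('b \<Rightarrow> 'b \<Rightarrow> bool) \<Rightarrow> bool" where
  "graph_iso V E W F \<longleftrightarrow> (\<exists>f. bij_betw f V W \<and> (\<forall>x\<in>V. \<forall>y\<in>V. E x y \<longleftrightarrow> F (f x) (f y)))"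

end

theory Submission
  imports Defs
begin

text \<open>In a graph of diameter 2 the row of the distance matrix at x sums K over all vertices
other than x plus, once more, over the antineighbours of x (the vertices distinct from and not
adjacent to x). Bonnet--Myers sharpness means min K = 2/diam = 1, so K \<ge> 1, and the row of a
vertex with an antineighbour can only balance if K = 1 at every other vertex. A pair of vertices
at distance 2 thus forces K = 1 everywhere, and then every row says that each vertex has exactly
one antineighbour: the complement of the graph is a perfect matching, i.e. the graph is CP(m).
Conversely, in CP(m) the same row identity shows that K = 1 is a solution; as the distance matrix
is symmetric with all row sums n, every solution has total curvature n, so its minimum is at
most 1 = 2/diam.\<close>

lemma walk_of_len_0_iff: "walk_of_len V E 0 x y \<longleftrightarrow> x = y \<and> x \<in> V"
  unfolding walk_of_len_def by (auto intro: exI[of _ "\<lambda>_. x"])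

lemma walk_of_len_1_iff: "walk_of_len V E 1 x y \<longleftrightarrow> E x y \<and> x \<in> V \<and> y \<in> V"
proof
  assume "walk_of_len V E 1 x y"
  then obtain p where "p 0 = x" "p 1 = y" "\<forall>i\<le>1. p i \<in> V" "\<forall>i<1. E (p i) (p (Suc i))"
    unfolding walk_of_len_def by blast
  then show "E x y \<and> x \<in> V \<and> y \<in> V" by fastforce
next
  assume "E x y \<and> x \<in> V \<and> y \<in> V"
  then show "walk_of_len V E 1 x y"
    unfolding walk_of_len_def by (intro exI[of _ "\<lambda>i. if i = 0 then x else y"]) auto
qed

lemma walk_of_len_2I:
  assumes "x \<in> V" "z \<in> V" "y \<in> V" "E x z" "E z y"
  shows "walk_of_len V E 2 x y"
  unfolding walk_of_len_def
  by (rule exI[of _ "\<lambda>i. if i = 0 then x else if i = 1 then z else y"]) (use assms in auto)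

lemma walk_of_len_2E:
  assumes "walk_of_len V E 2 x y"
  obtains z where "z \<in> V" "E x z" "E z y"
proof -
  from assms obtain p where p: "p 0 = x" "p 2 = y" "\<forall>i\<le>2. p i \<in> V" "\<forall>i<2. E (p i) (p (Suc i))"
    unfolding walk_of_len_def by blast
  have "p 1 \<in> V" "E (p 0) (p 1)" "E (p 1) (p 2)"
    using p(3)[rule_format, of 1] p(4)[rule_format, of 0] p(4)[rule_format, of 1]
    by (simp_all add: numeral_2_eq_2)
  then show thesis using that p(1,2) by blast
qed

lemma walk_of_len_rev:
  assumes sym: "\<And>x y. E x y \<Longrightarrow> E y x" and "walk_of_len V E n x y"
  shows "walk_of_len V E n y x"
proof -
  from assms(2) obtain p where p: "p 0 = x" "p n = y" "\<forall>i\<le>n. p i \<in> V" "\<forall>i<n. E (p i) (p (Suc i))"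
    unfolding walk_of_len_def by blast
  have "E (p (n - i)) (p (n - Suc i))" if "i < n" for i
  proof -
    have "E (p (n - Suc i)) (p (Suc (n - Suc i)))" using p(4) that by simp
    then show ?thesis using sym that by (simp add: Suc_diff_Suc)
  qed
  then show ?thesis
    unfolding walk_of_len_def using p by (intro exI[of _ "\<lambda>i. p (n - i)"]) auto
qed

lemma gdist_le: "walk_of_len V E n x y \<Longrightarrow> gdist V E x y \<le> n"
  unfolding gdist_def by (rule Least_le)

lemma walk_of_len_gdist:
  "connected_graph V E \<Longrightarrow> x \<in> V \<Longrightarrow> y \<in> V \<Longrightarrow> walk_of_len V E (gdist V E x y) x y"
  unfolding connected_graph_def gdist_def by (rule LeastI_ex) blast

lemma gdist_self: "x \<in> V \<Longrightarrow> gdist V E x x = 0"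
  using gdist_le[of V E 0 x x] by (simp add: walk_of_len_0_iff)

lemma gdist_commute:
  assumes "simple_graph V E"
  shows "gdist V E x y = gdist V E y x"
proof -
  have "walk_of_len V E n x y \<longleftrightarrow> walk_of_len V E n y x" for n
    using walk_of_len_rev[of E V n] assms unfolding simple_graph_def by blast
  then show ?thesis unfolding gdist_def by simp
qed

lemma gdist_cases_le_2:
  assumes "simple_graph V E" "connected_graph V E" "x \<in> V" "y \<in> V" "gdist V E x y \<le> 2"
  shows "gdist V E x y = (if y = x then 0 else if E x y then 1 else 2)"
proof -
  have walk: "walk_of_len V E (gdist V E x y) x y"
    using assms(2-4) by (rule walk_of_len_gdist)
  have irrefl: "\<not> E x x" using assms(1) unfolding simple_graph_def by blast
  consider "gdist V E x y = 0" | "gdist V E x y = 1" | "gdist V E x y = 2"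
    using assms(5) by linarith
  then show ?thesis
  proof cases
    case 1
    then show ?thesis using walk irrefl by (simp add: walk_of_len_0_iff)
  next
    case 2
    then show ?thesis using walk irrefl walk_of_len_1_iff[of V E x y] by auto
  next
    case 3
    have "y \<noteq> x" using gdist_self[OF assms(3), of E] 3 by auto
    moreover have "\<not> E x y"
      using gdist_le[of V E 1 x y] walk_of_len_1_iff[of V E x y] assms(3,4) 3 by auto
    ultimately show ?thesis using 3 by simp
  qed
qed

lemma finite_gdist_set: "finite V \<Longrightarrow> finite {gdist V E x y | x y. x \<in> V \<and> y \<in> V}"
  using finite_image_set2[of "\<lambda>x. x \<in> V" "\<lambda>y. y \<in> V" "gdist V E"] by simp

lemma gdist_le_diam:
  assumes "finite V" "x \<in> V" "y \<in> V"
  shows "gdist V E x y \<le> diam V E"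
proof -
  have "gdist V E x y \<in> {gdist V E x y | x y. x \<in> V \<and> y \<in> V}"
    using assms(2,3) by blast
  then show ?thesis
    unfolding diam_def using finite_gdist_set[OF assms(1)] by (rule Max_ge[rotated])
qed

lemma diam_attained:
  assumes "finite V" "V \<noteq> {}"
  obtains x y where "x \<in> V" "y \<in> V" "gdist V E x y = diam V E"
proof -
  let ?S = "{gdist V E x y | x y. x \<in> V \<and> y \<in> V}"
  obtain v where "v \<in> V" using assms(2) by blast
  then have "?S \<noteq> {}" by blast
  then have "diam V E \<in> ?S" unfolding diam_def by (rule Max_in[OF finite_gdist_set[OF assms(1)]])
  then show thesis using that by auto
qed

lemma diam_eqI:
  assumes "finite V" "\<And>x y. x \<in> V \<Longrightarrow> y \<in> V \<Longrightarrow> gdist V E x y \<le> d"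
    and "x \<in> V" "y \<in> V" "gdist V E x y = d"
  shows "diam V E = d"
  unfolding diam_def
proof (rule Max_eqI[OF finite_gdist_set[OF assms(1)]])
  fix n assume "n \<in> {gdist V E x y | x y. x \<in> V \<and> y \<in> V}"
  then obtain a b where "a \<in> V" "b \<in> V" "n = gdist V E a b" by blast
  then show "n \<le> d" using assms(2) by simp
next
  show "d \<in> {gdist V E x y | x y. x \<in> V \<and> y \<in> V}"
    using assms(3-5) by blast
qed

definition antineighbours :: "'a set \<Rightarrow> ('a \<Rightarrow> 'a \<Rightarrow> bool) \<Rightarrow> 'a \<Rightarrow> 'a set" where
  "antineighbours V E x = {y \<in> V. y \<noteq> x \<and> \<not> E x y}"

lemma distance_row_sum_diam_le_2:
  assumes "simple_graph V E" "connected_graph V E" "\<And>y. y \<in> V \<Longrightarrow> gdist V E x y \<le> 2" "x \<in> V"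
  shows "(\<Sum>y\<in>V. real (gdist V E x y) * K y) = (\<Sum>y\<in>V - {x}. K y) + (\<Sum>y\<in>antineighbours V E x. K y)"
proof -
  have fin: "finite V" using assms(1) unfolding simple_graph_def by blast
  have "(\<Sum>y\<in>V. real (gdist V E x y) * K y) =
      (\<Sum>y\<in>V. (if y \<noteq> x then K y else 0) + (if y \<noteq> x \<and> \<not> E x y then K y else 0))"
    using gdist_cases_le_2[OF assms(1,2,4)] assms(3) by (intro sum.cong) auto
  also have "\<dots> = (\<Sum>y\<in>{y\<in>V. y \<noteq> x}. K y) + (\<Sum>y\<in>{y\<in>V. y \<noteq> x \<and> \<not> E x y}. K y)"
    by (simp only: sum.distrib sum.inter_filter[OF fin])
  also have "{y\<in>V. y \<noteq> x} = V - {x}" by blast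
  finally show ?thesis unfolding antineighbours_def .
qed

lemma curv_solution_one_iff:
  assumes "simple_graph V E" "connected_graph V E" "\<And>x y. x \<in> V \<Longrightarrow> y \<in> V \<Longrightarrow> gdist V E x y \<le> 2"
  shows "curv_solution V E (\<lambda>_. 1) \<longleftrightarrow> (\<forall>x\<in>V. card (antineighbours V E x) = 1)"
proof -
  have fin: "finite V" using assms(1) unfolding simple_graph_def by blast
  have "(\<Sum>y\<in>V. real (gdist V E x y) * 1) = real (card V) - 1 + real (card (antineighbours V E x))"
    if "x \<in> V" for x
  proof -
    have "card V \<ge> 1" using fin that by (metis One_nat_def Suc_leI card_gt_0_iff empty_iff)
    then show ?thesis
      using distance_row_sum_diam_le_2[OF assms(1,2) assms(3)[OF that] that, of "\<lambda>_. 1"] fin that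
      by (simp add: of_nat_diff)
  qed
  then show ?thesis unfolding curv_solution_def by simp
qed

lemma steinerberger_curvature_one:
  assumes sg: "simple_graph V E" and sol: "curv_solution V E (\<lambda>_. 1)"
  shows "steinerberger_curvature V E (\<lambda>_. 1)"
  unfolding steinerberger_curvature_def
proof (intro conjI allI impI sol)
  fix K assume solK: "curv_solution V E K"
  let ?n = "real (card V)" and ?d = "\<lambda>x y. real (gdist V E x y)"
  have fin: "finite V" and ne: "V \<noteq> {}" using sg unfolding simple_graph_def by auto
  have row: "(\<Sum>x\<in>V. ?d y x) = ?n" if "y \<in> V" for y
    using sol that unfolding curv_solution_def by simp
  have "?n * ?n = (\<Sum>x\<in>V. \<Sum>y\<in>V. ?d x y * K y)"
    using solK unfolding curv_solution_def by simp
  also have "\<dots> = (\<Sum>y\<in>V. (\<Sum>x\<in>V. ?d y x) * K y)"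
    by (subst sum.swap) (simp add: sum_distrib_right gdist_commute[OF sg])
  also have "\<dots> = ?n * (\<Sum>y\<in>V. K y)"
    by (simp add: row sum_distrib_left)
  finally have "(\<Sum>y\<in>V. K y) = ?n"
    using fin ne by simp
  moreover have "?n * Min (K ` V) \<le> (\<Sum>y\<in>V. K y)"
    using sum_mono[of V "\<lambda>_. Min (K ` V)" K] fin by simp
  ultimately have "?n * Min (K ` V) \<le> ?n * 1" by simp
  moreover have "?n > 0" using fin ne by (simp add: card_gt_0_iff)
  ultimately have "Min (K ` V) \<le> 1" by (rule mult_left_le_imp_le)
  then show "Min (K ` V) \<le> Min ((\<lambda>_. 1) ` V)"
    using ne by (simp add: image_constant_conv)
qed

lemma sum_ge_1_tight_imp_eq_1:
  fixes K :: "'a \<Rightarrow> real"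
  assumes "finite V" "x \<in> V" "A \<subseteq> V" "A \<noteq> {}" "\<And>y. y \<in> V \<Longrightarrow> K y \<ge> 1"
    and "(\<Sum>y\<in>V - {x}. K y) + (\<Sum>y\<in>A. K y) = real (card V)"
  shows "\<forall>y\<in>V - {x}. K y = 1"
proof -
  have "card V > 0" using assms(1,2) card_gt_0_iff by blast
  then have "(\<Sum>y\<in>V - {x}. K y - 1) = (\<Sum>y\<in>V - {x}. K y) - (real (card V) - 1)"
    using assms(1,2) by (simp add: sum_subtractf of_nat_diff)
  moreover have "(\<Sum>y\<in>A. K y - 1) = (\<Sum>y\<in>A. K y) - real (card A)"
    by (simp add: sum_subtractf)
  ultimately have "(\<Sum>y\<in>V - {x}. K y - 1) + (\<Sum>y\<in>A. K y - 1) + real (card A) = 1"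
    using assms(6) by linarith
  moreover have "real (card A) \<ge> 1"
    using assms(1,3,4) by (simp add: Suc_leI card_gt_0_iff finite_subset)
  moreover have "(\<Sum>y\<in>A. K y - 1) \<ge> 0" "(\<Sum>y\<in>V - {x}. K y - 1) \<ge> 0"
    using assms(3,5) by (auto intro!: sum_nonneg)
  ultimately have "(\<Sum>y\<in>V - {x}. K y - 1) = 0" by linarith
  moreover have "finite (V - {x})" "\<forall>y\<in>V - {x}. K y - 1 \<ge> 0"
    using assms(1,5) by auto
  ultimately show ?thesis
    using sum_nonneg_eq_0_iff[of "V - {x}" "\<lambda>y. K y - 1"] by simp
qed

lemma antineighbours_card_1_if_bonnet_myers_sharp:
  assumes sg: "simple_graph V E" and con: "connected_graph V E" and dm: "diam V E = 2"
    and bm: "bonnet_myers_sharp V E" and "x \<in> V"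
  shows "card (antineighbours V E x) = 1"
proof -
  have fin: "finite V" and ne: "V \<noteq> {}" and sym: "\<And>x y. E x y \<Longrightarrow> E y x"
    using sg unfolding simple_graph_def by auto
  have le2: "gdist V E x y \<le> 2" if "x \<in> V" "y \<in> V" for x y
    using gdist_le_diam[OF fin that, of E] dm by simp
  obtain x0 y0 where x0: "x0 \<in> V" and y0: "y0 \<in> V" and "gdist V E x0 y0 = 2"
    using diam_attained[OF fin ne, of E] dm by metis
  then have "y0 \<noteq> x0" "\<not> E x0 y0"
    using gdist_cases_le_2[OF sg con x0 y0] by (auto split: if_splits)
  then have anti: "y0 \<in> antineighbours V E x0" "x0 \<in> antineighbours V E y0"
    using x0 y0 sym unfolding antineighbours_def by auto
  obtain K where sc: "steinerberger_curvature V E K" and "Min (K ` V) = 1"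
    using bm dm unfolding bonnet_myers_sharp_def by auto
  then have K_ge_1: "K y \<ge> 1" if "y \<in> V" for y
    using Min_le[of "K ` V" "K y"] fin that by auto
  have row: "(\<Sum>y\<in>V - {z}. K y) + (\<Sum>y\<in>antineighbours V E z. K y) = real (card V)" if "z \<in> V" for z
    using sc distance_row_sum_diam_le_2[OF sg con le2[OF that] that, of K] that
    unfolding steinerberger_curvature_def curv_solution_def by simp
  have "\<forall>y\<in>V - {z}. K y = 1" if "z \<in> V" "antineighbours V E z \<noteq> {}" for z
    using that row[OF that(1)] K_ge_1 fin
    by (intro sum_ge_1_tight_imp_eq_1) (auto simp: antineighbours_def)
  then have "K y = 1" if "y \<in> V" for y
    using x0 y0 anti that \<open>y0 \<noteq> x0\<close> by blast
  then have "curv_solution V E (\<lambda>_. 1)"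
    using sc unfolding steinerberger_curvature_def curv_solution_def by simp
  then show ?thesis
    using curv_solution_one_iff[OF sg con] le2 \<open>x \<in> V\<close> by blast
qed

lemma antineighbour_involution:
  assumes sg: "simple_graph V E" and card1: "\<And>x. x \<in> V \<Longrightarrow> card (antineighbours V E x) = 1"
  obtains \<sigma> where "\<forall>x\<in>V. \<sigma> x \<in> V \<and> \<sigma> x \<noteq> x \<and> \<sigma> (\<sigma> x) = x"
    and "\<forall>x\<in>V. \<forall>y\<in>V. E x y \<longleftrightarrow> y \<noteq> x \<and> y \<noteq> \<sigma> x"
proof -
  define \<sigma> where "\<sigma> x = the_elem (antineighbours V E x)" for x
  have anti: "antineighbours V E x = {\<sigma> x}" if "x \<in> V" for x
    using card1[OF that] unfolding \<sigma>_def by (metis card_1_singletonE the_elem_eq)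
  then have \<sigma>: "\<sigma> x \<in> V" "\<sigma> x \<noteq> x" "\<not> E x (\<sigma> x)" if "x \<in> V" for x
    using that unfolding antineighbours_def by blast+
  have edge: "E x y \<longleftrightarrow> y \<noteq> x \<and> y \<noteq> \<sigma> x" if "x \<in> V" "y \<in> V" for x y
    using anti[OF that(1)] sg that unfolding antineighbours_def simple_graph_def by blast
  have "\<sigma> (\<sigma> x) = x" if "x \<in> V" for x
  proof -
    have "\<not> E (\<sigma> x) x" using \<sigma>(3)[OF that] sg unfolding simple_graph_def by blast
    then show ?thesis using edge[OF \<sigma>(1)[OF that] that] \<sigma>(2)[OF that] by auto
  qed
  with \<sigma> edge show thesis using that by blast
qed

lemma involution_transversal:
  assumes "finite V" and \<sigma>: "\<And>x. x \<in> V \<Longrightarrow> \<sigma> x \<in> V \<and> \<sigma> x \<noteq> x \<and> \<sigma> (\<sigma> x) = x"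
  obtains R where "R \<subseteq> V" "\<forall>x\<in>V. \<sigma> x \<in> R \<longleftrightarrow> x \<notin> R"
proof -
  obtain e :: "'a \<Rightarrow> nat" where e: "inj_on e V"
    using finite_imp_inj_to_nat_seg[OF assms(1)] by blast
  define R where "R = {x \<in> V. e x < e (\<sigma> x)}"
  have "\<sigma> x \<in> R \<longleftrightarrow> x \<notin> R" if x: "x \<in> V" for x
  proof -
    have "e (\<sigma> x) \<noteq> e x" using inj_on_eq_iff[OF e] \<sigma>[OF x] x by blast
    then show ?thesis using \<sigma>[OF x] x unfolding R_def by auto
  qed
  moreover have "R \<subseteq> V" unfolding R_def by blast
  ultimately show thesis using that by blast
qed

lemma graph_iso_if_bij_betw_from:
  assumes g: "bij_betw g W V" and edges: "\<And>k l. k \<in> W \<Longrightarrow> l \<in> W \<Longrightarrow> F k l \<longleftrightarrow> E (g k) (g l)"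
  shows "graph_iso V E W F"
  unfolding graph_iso_def
proof (intro exI conjI ballI)
  show "bij_betw (inv_into W g) V W" by (rule bij_betw_inv_into[OF g])
  fix x y assume "x \<in> V" "y \<in> V"
  then show "E x y \<longleftrightarrow> F (inv_into W g x) (inv_into W g y)"
    using g edges by (simp add: bij_betw_def f_inv_into_f inv_into_into)
qed

lemma div_2_eq_iff: "(k::nat) div 2 = l div 2 \<longleftrightarrow> l = k \<or> l = (if even k then k + 1 else k - 1)"
  by (cases "even k") (auto elim!: evenE oddE)

text \<open>Listing V as r 0, \<sigma> (r 0), r 1, \<sigma> (r 1), \<dots> for an enumeration r of a transversal
turns the pairs {x, \<sigma> x} into the non-edges {2a, 2a+1} of CP(m).\<close>

lemma bij_betw_pair_enumeration:
  fixes r :: "nat \<Rightarrow> 'a"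
  assumes \<sigma>: "\<And>x. x \<in> V \<Longrightarrow> \<sigma> x \<in> V \<and> \<sigma> x \<noteq> x \<and> \<sigma> (\<sigma> x) = x"
    and R: "R \<subseteq> V" "\<And>x. x \<in> V \<Longrightarrow> \<sigma> x \<in> R \<longleftrightarrow> x \<notin> R" and r: "bij_betw r {..<m} R"
  shows "bij_betw (\<lambda>k. if even k then r (k div 2) else \<sigma> (r (k div 2))) {..<2 * m} V"
proof -
  define g where "g = (\<lambda>k. if even k then r (k div 2) else \<sigma> (r (k div 2)))"
  have r_in: "r a \<in> R" "r a \<in> V" if "a < m" for a
    using r R(1) that unfolding bij_betw_def by auto
  have g: "g k \<in> V" "g k \<in> R \<longleftrightarrow> even k" if "k < 2 * m" for k
    using r_in[of "k div 2"] R(2) \<sigma> that unfolding g_def by auto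
  have "inj_on g {..<2 * m}"
  proof (rule inj_onI)
    fix k l assume k: "k \<in> {..<2 * m}" and l: "l \<in> {..<2 * m}" and gkl: "g k = g l"
    then have parity: "even k \<longleftrightarrow> even l" using g(2)[of k] g(2)[of l] by simp
    have "r (k div 2) = r (l div 2)"
    proof (cases "even k")
      case False
      then have "\<sigma> (\<sigma> (r (k div 2))) = \<sigma> (\<sigma> (r (l div 2)))"
        using gkl parity unfolding g_def by simp
      then show ?thesis using \<sigma>[OF r_in(2)[of "k div 2"]] \<sigma>[OF r_in(2)[of "l div 2"]] k l by simp
    qed (use gkl parity in \<open>simp add: g_def\<close>)
    then have "k div 2 = l div 2" using inj_on_eq_iff[OF bij_betw_imp_inj_on[OF r]] k l by simp
    with parity show "k = l" using div_2_eq_iff[of k l] by auto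
  qed
  moreover have "V \<subseteq> g ` {..<2 * m}"
  proof
    fix x assume x: "x \<in> V"
    show "x \<in> g ` {..<2 * m}"
    proof (cases "x \<in> R")
      case True
      then obtain a where "a < m" "x = r a" using r unfolding bij_betw_def by auto
      then show ?thesis by (intro image_eqI[of _ _ "2 * a"]) (auto simp: g_def)
    next
      case False
      then obtain a where "a < m" "\<sigma> x = r a" using R(2)[OF x] r unfolding bij_betw_def by auto
      then show ?thesis using \<sigma>[OF x] by (intro image_eqI[of _ _ "2 * a + 1"]) (auto simp: g_def)
    qed
  qed
  moreover have "g ` {..<2 * m} \<subseteq> V" using g(1) by auto
  ultimately show ?thesis unfolding g_def[symmetric] bij_betw_def by blast
qed

lemma graph_iso_cocktail_party:
  assumes fin: "finite V" and \<sigma>: "\<And>x. x \<in> V \<Longrightarrow> \<sigma> x \<in> V \<and> \<sigma> x \<noteq> x \<and> \<sigma> (\<sigma> x) = x"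
    and edge: "\<And>x y. x \<in> V \<Longrightarrow> y \<in> V \<Longrightarrow> E x y \<longleftrightarrow> y \<noteq> x \<and> y \<noteq> \<sigma> x"
  shows "\<exists>m. card V = 2 * m \<and> graph_iso V E (cp_vertices m) (cp_edge m)"
proof -
  obtain R where "R \<subseteq> V" "\<forall>x\<in>V. \<sigma> x \<in> R \<longleftrightarrow> x \<notin> R"
    using involution_transversal[OF fin \<sigma>] by blast
  then have R: "R \<subseteq> V" "\<And>x. x \<in> V \<Longrightarrow> \<sigma> x \<in> R \<longleftrightarrow> x \<notin> R" by blast+
  define m where "m = card R"
  obtain r where r: "bij_betw r {..<m} R"
    using ex_bij_betw_nat_finite[OF finite_subset[OF R(1) fin]] unfolding m_def atLeast0LessThan by blast
  define g where "g = (\<lambda>k. if even k then r (k div 2) else \<sigma> (r (k div 2)))"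
  define flip :: "nat \<Rightarrow> nat" where "flip k = (if even k then k + 1 else k - 1)" for k
  have bij: "bij_betw g (cp_vertices m) V"
    unfolding g_def cp_vertices_def by (rule bij_betw_pair_enumeration[OF \<sigma> R r])
  have flip: "flip k < 2 * m" "flip k div 2 = k div 2" "even (flip k) \<longleftrightarrow> odd k" if "k < 2 * m" for k
    using that div_2_eq_iff[of k "flip k"] unfolding flip_def by (auto elim!: evenE oddE)
  have "cp_edge m k l \<longleftrightarrow> E (g k) (g l)" if "k \<in> cp_vertices m" "l \<in> cp_vertices m" for k l
  proof -
    have k: "k < 2 * m" and l: "l < 2 * m" and gk: "g k \<in> V" and gl: "g l \<in> V"
      using that bij unfolding cp_vertices_def bij_betw_def by auto
    have "r (k div 2) \<in> V" using r R(1) k unfolding bij_betw_def by auto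
    then have "\<sigma> (g k) = g (flip k)"
      using flip[OF k] \<sigma> unfolding g_def by auto
    then have "E (g k) (g l) \<longleftrightarrow> g l \<noteq> g k \<and> g l \<noteq> g (flip k)"
      using edge[OF gk gl] by simp
    also have "\<dots> \<longleftrightarrow> l \<noteq> k \<and> l \<noteq> flip k"
      using inj_on_eq_iff[OF bij_betw_imp_inj_on[OF bij]] flip(1)[OF k] k l
      unfolding cp_vertices_def by auto
    also have "\<dots> \<longleftrightarrow> k div 2 \<noteq> l div 2"
      by (simp only: flip_def div_2_eq_iff de_Morgan_disj)
    finally show ?thesis using k l unfolding cp_edge_def by simp
  qed
  then have "graph_iso V E (cp_vertices m) (cp_edge m)"
    by (rule graph_iso_if_bij_betw_from[OF bij])
  moreover have "card V = 2 * m"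
    using bij_betw_same_card[OF bij] unfolding cp_vertices_def by simp
  ultimately show ?thesis by blast
qed

lemma card_ge_3_if_diam_2:
  assumes sg: "simple_graph V E" and con: "connected_graph V E" and dm: "diam V E = 2"
  shows "card V \<ge> 3"
proof -
  have fin: "finite V" and ne: "V \<noteq> {}" and irrefl: "\<And>x. \<not> E x x"
    using sg unfolding simple_graph_def by auto
  obtain x y where x: "x \<in> V" and y: "y \<in> V" and xy: "gdist V E x y = 2"
    using diam_attained[OF fin ne, of E] dm by metis
  then obtain z where "z \<in> V" "E x z" "E z y"
    using walk_of_len_gdist[OF con x y] by (auto elim: walk_of_len_2E)
  moreover have "x \<noteq> y" using gdist_self[OF x, of E] xy by auto
  moreover have "z \<noteq> x" "z \<noteq> y" using \<open>E x z\<close> \<open>E z y\<close> irrefl by blast+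
  ultimately have "card {x, y, z} = 3" by simp
  moreover have "card {x, y, z} \<le> card V" using x y \<open>z \<in> V\<close> by (intro card_mono[OF fin]) blast
  ultimately show ?thesis by linarith
qed

lemma cocktail_party_if_bonnet_myers_sharp:
  assumes sg: "simple_graph V E" and con: "connected_graph V E" and dm: "diam V E = 2"
    and bm: "bonnet_myers_sharp V E"
  shows "\<exists>m\<ge>2. graph_iso V E (cp_vertices m) (cp_edge m)"
proof -
  obtain \<sigma> where "\<forall>x\<in>V. \<sigma> x \<in> V \<and> \<sigma> x \<noteq> x \<and> \<sigma> (\<sigma> x) = x"
    and "\<forall>x\<in>V. \<forall>y\<in>V. E x y \<longleftrightarrow> y \<noteq> x \<and> y \<noteq> \<sigma> x"
    using antineighbour_involution[OF sg antineighbours_card_1_if_bonnet_myers_sharp[OF assms]]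
    by blast
  then obtain m where "card V = 2 * m" "graph_iso V E (cp_vertices m) (cp_edge m)"
    using graph_iso_cocktail_party[of V \<sigma> E] sg unfolding simple_graph_def by blast
  moreover have "card V \<ge> 3" using card_ge_3_if_diam_2[OF sg con dm] .
  ultimately show ?thesis by (intro exI[of _ m]) simp
qed

lemma cp_simple_graph: "m \<ge> 1 \<Longrightarrow> simple_graph (cp_vertices m) (cp_edge m)"
  unfolding simple_graph_def cp_vertices_def cp_edge_def by (auto simp: lessThan_empty_iff)

lemma cp_walk_le_2:
  assumes m: "m \<ge> 2" and i: "i \<in> cp_vertices m" and j: "j \<in> cp_vertices m"
  shows "\<exists>n\<le>2. walk_of_len (cp_vertices m) (cp_edge m) n i j"
proof -
  consider "j = i" | "cp_edge m i j" | "j \<noteq> i" "\<not> cp_edge m i j" by blast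
  then show ?thesis
  proof cases
    case 1
    then show ?thesis using i by (intro exI[of _ 0]) (simp add: walk_of_len_0_iff)
  next
    case 2
    then have "walk_of_len (cp_vertices m) (cp_edge m) 1 i j"
      using i j walk_of_len_1_iff[of "cp_vertices m" "cp_edge m" i j] by blast
    then show ?thesis by (intro exI[of _ 1]) simp
  next
    case 3
    then have ij: "i div 2 = j div 2" using i j unfolding cp_edge_def cp_vertices_def by auto
    define z :: nat where "z = (if i div 2 = 0 then 2 else 0)"
    have "z < 2 * m" "z div 2 \<noteq> i div 2" unfolding z_def using m by auto
    then have "z \<in> cp_vertices m" "cp_edge m i z" "cp_edge m z j"
      using i j ij unfolding cp_vertices_def cp_edge_def by auto
    then have "walk_of_len (cp_vertices m) (cp_edge m) 2 i j"
      using walk_of_len_2I[OF i _ j] by blast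
    then show ?thesis by blast
  qed
qed

lemma cp_connected: "m \<ge> 2 \<Longrightarrow> connected_graph (cp_vertices m) (cp_edge m)"
  unfolding connected_graph_def using cp_walk_le_2 by blast

lemma cp_gdist_le_2:
  "m \<ge> 2 \<Longrightarrow> i \<in> cp_vertices m \<Longrightarrow> j \<in> cp_vertices m \<Longrightarrow> gdist (cp_vertices m) (cp_edge m) i j \<le> 2"
  using cp_walk_le_2 gdist_le[of "cp_vertices m" "cp_edge m" _ i j] order_trans by blast

lemma cp_antineighbours:
  assumes "i \<in> cp_vertices m"
  shows "antineighbours (cp_vertices m) (cp_edge m) i = {if even i then i + 1 else i - 1}"
proof -
  let ?i' = "if even i then i + 1 else i - 1"
  have "?i' < 2 * m" "?i' \<noteq> i"
    using assms unfolding cp_vertices_def by (auto elim!: evenE oddE)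
  then have "j \<in> antineighbours (cp_vertices m) (cp_edge m) i \<longleftrightarrow> j = ?i'" for j
    using div_2_eq_iff[of i j] assms unfolding antineighbours_def cp_vertices_def cp_edge_def
    by auto
  then show ?thesis by blast
qed

lemma cp_diam: "m \<ge> 2 \<Longrightarrow> diam (cp_vertices m) (cp_edge m) = 2"
proof -
  assume m: "m \<ge> 2"
  have sg: "simple_graph (cp_vertices m) (cp_edge m)" using m by (intro cp_simple_graph) simp
  have "0 \<in> cp_vertices m" "1 \<in> cp_vertices m" using m unfolding cp_vertices_def by auto
  moreover have "gdist (cp_vertices m) (cp_edge m) 0 1 = 2"
    using gdist_cases_le_2[OF sg cp_connected[OF m] calculation cp_gdist_le_2[OF m calculation]]
    unfolding cp_edge_def by simp
  ultimately show ?thesis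
    using diam_eqI[of "cp_vertices m" "cp_edge m" 2 0 1] cp_gdist_le_2[OF m]
    by (simp add: cp_vertices_def)
qed

lemma cp_bonnet_myers_sharp: "m \<ge> 2 \<Longrightarrow> bonnet_myers_sharp (cp_vertices m) (cp_edge m)"
proof -
  assume m: "m \<ge> 2"
  have sg: "simple_graph (cp_vertices m) (cp_edge m)" using m by (intro cp_simple_graph) simp
  have sol: "curv_solution (cp_vertices m) (cp_edge m) (\<lambda>_. 1)"
    using curv_solution_one_iff[OF sg cp_connected[OF m] cp_gdist_le_2[OF m]] cp_antineighbours
    by simp
  moreover have "Min ((\<lambda>_. 1::real) ` cp_vertices m) = 1"
    using m unfolding cp_vertices_def by (simp add: image_constant_conv lessThan_empty_iff)
  ultimately show ?thesis
    unfolding bonnet_myers_sharp_def using steinerberger_curvature_one[OF sg sol] cp_diam[OF m] by auto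
qed

theorem mainTheorem10:
  shows "(\<forall>(V::'a set) E. simple_graph V E \<and> connected_graph V E \<and> diam V E = 2 \<and>
            bonnet_myers_sharp V E \<longrightarrow>
            (\<exists>m\<ge>2. graph_iso V E (cp_vertices m) (cp_edge m)))
       \<and> (\<forall>m\<ge>2. simple_graph (cp_vertices m) (cp_edge m) \<and>
            connected_graph (cp_vertices m) (cp_edge m) \<and>
            diam (cp_vertices m) (cp_edge m) = 2 \<and>
            bonnet_myers_sharp (cp_vertices m) (cp_edge m))"
proof (intro conjI allI impI)
  fix V :: "'a set" and E
  assume "simple_graph V E \<and> connected_graph V E \<and> diam V E = 2 \<and> bonnet_myers_sharp V E"
  then show "\<exists>m\<ge>2. graph_iso V E (cp_vertices m) (cp_edge m)"
    using cocktail_party_if_bonnet_myers_sharp by blast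
next
  fix m :: nat assume m: "m \<ge> 2"
  show "simple_graph (cp_vertices m) (cp_edge m)" using m by (intro cp_simple_graph) simp
  show "connected_graph (cp_vertices m) (cp_edge m)" by (rule cp_connected[OF m])
  show "diam (cp_vertices m) (cp_edge m) = 2" by (rule cp_diam[OF m])
  show "bonnet_myers_sharp (cp_vertices m) (cp_edge m)" by (rule cp_bonnet_myers_sharp[OF m])
qed

end
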